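(* Let $\alpha>0$, $\alpha\ne1$. For unitaries $U\in\mathcal{U}(d_1)$ and $V\in\mathcal{U}(d_2)$, $H_\alpha(U\otimes V)=H_\alpha(U)+H_\alpha(V)-(\alpha-1)H_\alpha(U)H_\alpha(V)$, where $H_\alpha(U)$, $H_\alpha(V)$ are computed with the displacement operators of $\mathbb{C}^{d_1}$ and $\mathbb{C}^{d_2}$ respectively, and $H_\alpha(U\otimes V)$ with the displacement operators $D_{\mathbf a_1}\otimes D_{\mathbf a_2}$ of $\mathbb{C}^{d_1}\otimes\mathbb{C}^{d_2}$.
   Context: For a Hilbert space $\mathbb{C}^{d}$ with a fixed family of Weyl–Heisenberg displacement operators $\{D_{\mathbf a}\}$ indexed by a set of size $d^2$ (e.g. $d=d_L^n$, $D_{\mathbf a}=D_{\mathbf a_1}\otimes\cdots\otimes D_{\mathbf a_n}$ with single-qudit $D_{(a_1,a_2)}=\tau^{a_1a_2}X^{a_1}Z^{a_2}$, $Z|k\rangle=e^{2\pi ik/d_L}|k\rangle$, $X|k\rangle=|k+1\rangle$, $\tau=-e^{i\pi/d_L}$), and a unitary $U$ on $\mathbb{C}^d$, set $\mathfrak{C}_{\mathbf{ab}}(U)=\frac1d\operatorname{tr}(D_{\mathbf a}^\dagger UD_{\mathbf b}U^\dagger)$, $\mathfrak{D}_{\mathbf{ab}}(U)=|\mathfrak{C}_{\mathbf{ab}}(U)|^2$, and the $\alpha$-Clifford entropy $H_\alpha(U)=\frac{1}{\alpha-1}\Big(1-\frac{1}{d^2}\sum_{\mathbf a,\mathbf b}\mathfrak{D}_{\mathbf{ab}}(U)^\alpha\Big)$.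 *)

theory Defs
  imports Complex_Main
begin

text \<open>Square complex matrices are represented as functions nat => nat => complex;
  the dimension is carried explicitly and only entries with indices below it matter.\<close>

type_synonym cmat = "nat \<Rightarrow> nat \<Rightarrow> complex"

definition mmult :: "nat \<Rightarrow> cmat \<Rightarrow> cmat \<Rightarrow> cmat" where
  "mmult n A B = (\<lambda>i j. \<Sum>k<n. A i k * B k j)"

definition adj :: "cmat \<Rightarrow> cmat" where
  "adj A = (\<lambda>i j. cnj (A j i))"

definition mtrace :: "nat \<Rightarrow> cmat \<Rightarrow> complex" where
  "mtrace n A = (\<Sum>i<n. A i i)"

definition idm :: cmat where
  "idm = (\<lambda>i j. if i = j then 1 else 0)"

definition unitary_mat :: "nat \<Rightarrow> cmat \<Rightarrow> bool" where
  "unitary_mat n U \<longleftrightarrow>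
     (\<forall>i<n. \<forall>j<n. mmult n U (adj U) i j = idm i j \<and> mmult n (adj U) U i j = idm i j)"

text \<open>Kronecker product A \<otimes> B, where B has dimension d2
  (basis |i1> \<otimes> |i2> is indexed by i1 * d2 + i2).\<close>
definition kron :: "nat \<Rightarrow> cmat \<Rightarrow> cmat \<Rightarrow> cmat" where
  "kron d2 A B = (\<lambda>i j. A (i div d2) (j div d2) * B (i mod d2) (j mod d2))"

text \<open>Single-qudit displacement operator D_(a1,a2) = tau^(a1 a2) X^a1 Z^a2 on C^dL,
  with Z|k> = omega^k |k>, X|k> = |k+1 mod dL>, omega = exp(2 pi i/dL), tau = -exp(i pi/dL).
  Entry (i,j): X^a1 Z^a2 |j> = omega^(a2 j) |j + a1 mod dL>.\<close>
definition disp1 :: "nat \<Rightarrow> nat \<times> nat \<Rightarrow> cmat" where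
  "disp1 dL a = (\<lambda>i j.
     if i = (j + fst a) mod dL
     then (- exp (\<i> * of_real pi / of_nat dL)) ^ (fst a * snd a)
          * exp (2 * of_real pi * \<i> / of_nat dL) ^ (snd a * j)
     else 0)"

fun disp :: "nat list \<Rightarrow> (nat \<times> nat) list \<Rightarrow> cmat" where
  "disp [] [] = idm"
| "disp (dL # ds) (a # as) = kron (prod_list ds) (disp1 dL a) (disp ds as)"
| "disp _ _ = (\<lambda>i j. 0)"

definition disp_idx :: "nat list \<Rightarrow> (nat \<times> nat) list set" where
  "disp_idx ds = {as. length as = length ds \<and>
                      (\<forall>k<length ds. fst (as ! k) < ds ! k \<and> snd (as ! k) < ds ! k)}"

definition cliff_coeff :: "nat list \<Rightarrow> (nat \<times> nat) list \<Rightarrow> (nat \<times> nat) list \<Rightarrow> cmat \<Rightarrow> complex" where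
  "cliff_coeff ds a b U = (let d = prod_list ds in
     mtrace d (mmult d (mmult d (adj (disp ds a)) U) (mmult d (disp ds b) (adj U))) / of_nat d)"

definition cliff_dist :: "nat list \<Rightarrow> (nat \<times> nat) list \<Rightarrow> (nat \<times> nat) list \<Rightarrow> cmat \<Rightarrow> real" where
  "cliff_dist ds a b U = (cmod (cliff_coeff ds a b U))\<^sup>2"

definition cliff_entropy :: "real \<Rightarrow> nat list \<Rightarrow> cmat \<Rightarrow> real" where
  "cliff_entropy \<alpha> ds U = (let d = real (prod_list ds) in
     (1 / (\<alpha> - 1)) * (1 - (1 / d\<^sup>2) *
       (\<Sum>a\<in>disp_idx ds. \<Sum>b\<in>disp_idx ds. cliff_dist ds a b U powr \<alpha>)))"

end

theory Submission
  imports Defs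
begin

text \<open>The displacement operators of the composite system are the Kronecker products
  \<open>D\<^sub>a \<otimes> D\<^sub>a\<^sub>'\<close>, and products, adjoints and traces all factor through Kronecker
  products, so every Clifford coefficient of \<open>U \<otimes> V\<close> is the product of a coefficient of
  \<open>U\<close> and one of \<open>V\<close>. Hence the normalised moment \<open>d\<^sup>-\<^sup>2 \<Sum>\<^sub>a\<^sub>b D\<^sub>a\<^sub>b(U)\<^sup>\<alpha>\<close> is
  multiplicative, and \<open>H\<^sub>\<alpha> = (1 - moment) / (\<alpha> - 1)\<close> obeys the Tsallis composition rule.\<close>

lemma sum_lessThan_mult:
  fixes f :: "nat \<Rightarrow> 'a::comm_monoid_add"
  shows "(\<Sum>k<m * n. f k) = (\<Sum>i<m. \<Sum>j<n. f (i * n + j))"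
proof -
  have "sum f {i * n..<i * n + n} = (\<Sum>j<n. f (i * n + j))" for i
    using sum.shift_bounds_nat_ivl[of f 0 "i * n" n] by (simp add: atLeast0LessThan add.commute)
  then show ?thesis
    by (simp add: sum.nat_group[symmetric])
qed

lemma mmult_kron:
  "mmult (m * n) (kron n A B) (kron n C D) = kron n (mmult m A C) (mmult n B D)"
proof (intro ext)
  fix i j
  show "mmult (m * n) (kron n A B) (kron n C D) i j = kron n (mmult m A C) (mmult n B D) i j"
  proof (cases "n = 0")
    case True
    then show ?thesis by (simp add: mmult_def kron_def)
  next
    case False
    have "mmult (m * n) (kron n A B) (kron n C D) i j
        = (\<Sum>k1<m. \<Sum>k2<n. kron n A B i (k1 * n + k2) * kron n C D (k1 * n + k2) j)"
      unfolding mmult_def by (rule sum_lessThan_mult)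
    also have "\<dots> = (\<Sum>k1<m. \<Sum>k2<n. (A (i div n) k1 * C k1 (j div n)) * (B (i mod n) k2 * D k2 (j mod n)))"
      using False by (intro sum.cong refl) (simp add: kron_def mult_ac)
    also have "\<dots> = kron n (mmult m A C) (mmult n B D) i j"
      by (simp add: kron_def mmult_def sum_product)
    finally show ?thesis .
  qed
qed

lemma adj_kron: "adj (kron n A B) = kron n (adj A) (adj B)"
  by (simp add: adj_def kron_def fun_eq_iff)

lemma mtrace_kron: "mtrace (m * n) (kron n A B) = mtrace m A * mtrace n B"
proof (cases "n = 0")
  case True
  then show ?thesis by (simp add: mtrace_def)
next
  case False
  have "mtrace (m * n) (kron n A B) = (\<Sum>k1<m. \<Sum>k2<n. kron n A B (k1 * n + k2) (k1 * n + k2))"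
    unfolding mtrace_def by (rule sum_lessThan_mult)
  also have "\<dots> = (\<Sum>k1<m. \<Sum>k2<n. A k1 k1 * B k2 k2)"
    using False by (intro sum.cong refl) (simp add: kron_def)
  finally show ?thesis
    by (simp add: mtrace_def sum_product)
qed

lemma kron_assoc: "kron (m * n) A (kron n B C) = kron n (kron m A B) C"
proof -
  have div: "i div (m * n) = i div n div m" for i :: nat
    by (metis div_mult2_eq mult.commute)
  have mod_div: "i mod (m * n) div n = i div n mod m" for i :: nat
    using mod_mult2_eq[of i n m] by (cases "n = 0") (simp_all add: mult.commute)
  have mod_mod: "i mod (m * n) mod n = i mod n" for i :: nat
    by (simp add: mod_mod_cancel)
  show ?thesis
    by (simp add: kron_def fun_eq_iff div mod_div mod_mod mult.assoc)
qed

text \<open>Matrices are total functions on \<open>nat \<times> nat\<close>; the operators below agree only on their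
  \<open>n \<times> n\<close> block, which is all that \<open>mmult n\<close>, \<open>adj\<close> and \<open>mtrace n\<close> see.\<close>

definition mat_eq_on :: "nat \<Rightarrow> cmat \<Rightarrow> cmat \<Rightarrow> bool" where
  "mat_eq_on n A B \<longleftrightarrow> (\<forall>i<n. \<forall>j<n. A i j = B i j)"

lemma mat_eq_on_refl: "mat_eq_on n A A"
  by (simp add: mat_eq_on_def)

lemma mat_eq_on_mmult:
  "mat_eq_on n A A' \<Longrightarrow> mat_eq_on n B B' \<Longrightarrow> mat_eq_on n (mmult n A B) (mmult n A' B')"
  by (simp add: mat_eq_on_def mmult_def)

lemma mat_eq_on_adj: "mat_eq_on n A A' \<Longrightarrow> mat_eq_on n (adj A) (adj A')"
  by (simp add: mat_eq_on_def adj_def)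

lemma mat_eq_on_kron: "mat_eq_on n B B' \<Longrightarrow> mat_eq_on (m * n) (kron n A B) (kron n A B')"
  by (cases "n = 0") (auto simp: mat_eq_on_def kron_def)

lemma mtrace_cong: "mat_eq_on n A A' \<Longrightarrow> mtrace n A = mtrace n A'"
  by (simp add: mat_eq_on_def mtrace_def)

lemma disp_append:
  assumes "length a1 = length ds1"
  shows "mat_eq_on (prod_list ds1 * prod_list ds2) (disp (ds1 @ ds2) (a1 @ a2))
           (kron (prod_list ds2) (disp ds1 a1) (disp ds2 a2))"
  using assms
proof (induction ds1 arbitrary: a1)
  case Nil
  then show ?case by (auto simp: mat_eq_on_def kron_def idm_def)
next
  case (Cons dL ds a1)
  then obtain a as where a1: "a1 = a # as" and len: "length as = length ds"
    by (cases a1) auto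
  have "mat_eq_on (dL * (prod_list ds * prod_list ds2))
          (kron (prod_list ds * prod_list ds2) (disp1 dL a) (disp (ds @ ds2) (as @ a2)))
          (kron (prod_list ds * prod_list ds2) (disp1 dL a) (kron (prod_list ds2) (disp ds as) (disp ds2 a2)))"
    by (rule mat_eq_on_kron) (rule Cons.IH[OF len])
  moreover have "kron (prod_list ds * prod_list ds2) (disp1 dL a) (kron (prod_list ds2) (disp ds as) (disp ds2 a2))
      = kron (prod_list ds2) (disp (dL # ds) a1) (disp ds2 a2)"
    using a1 by (simp add: kron_assoc)
  ultimately show ?case
    using a1 by (simp add: mult.assoc)
qed

lemma cliff_coeff_kron:
  assumes "length a1 = length ds1" and "length b1 = length ds1"
  shows "cliff_coeff (ds1 @ ds2) (a1 @ a2) (b1 @ b2) (kron (prod_list ds2) U V)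
       = cliff_coeff ds1 a1 b1 U * cliff_coeff ds2 a2 b2 V"
proof -
  define m where "m = prod_list ds1"
  define n where "n = prod_list ds2"
  let ?W = "kron n U V"
  have "mtrace (m * n) (mmult (m * n) (mmult (m * n) (adj (disp (ds1 @ ds2) (a1 @ a2))) ?W)
                                     (mmult (m * n) (disp (ds1 @ ds2) (b1 @ b2)) (adj ?W)))
      = mtrace (m * n) (mmult (m * n) (mmult (m * n) (adj (kron n (disp ds1 a1) (disp ds2 a2))) ?W)
                                     (mmult (m * n) (kron n (disp ds1 b1) (disp ds2 b2)) (adj ?W)))"
    using disp_append[OF assms(1)] disp_append[OF assms(2)] unfolding m_def n_def
    by (intro mtrace_cong mat_eq_on_mmult mat_eq_on_adj mat_eq_on_refl)
  also have "\<dots> = mtrace m (mmult m (mmult m (adj (disp ds1 a1)) U) (mmult m (disp ds1 b1) (adj U)))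
      * mtrace n (mmult n (mmult n (adj (disp ds2 a2)) V) (mmult n (disp ds2 b2) (adj V)))"
    by (simp add: adj_kron mmult_kron mtrace_kron)
  finally show ?thesis
    unfolding cliff_coeff_def Let_def by (simp add: m_def n_def)
qed

lemma cliff_dist_kron:
  assumes "length a1 = length ds1" and "length b1 = length ds1"
  shows "cliff_dist (ds1 @ ds2) (a1 @ a2) (b1 @ b2) (kron (prod_list ds2) U V)
       = cliff_dist ds1 a1 b1 U * cliff_dist ds2 a2 b2 V"
  by (simp add: cliff_dist_def cliff_coeff_kron[OF assms] norm_mult power_mult_distrib)

lemma cliff_dist_nonneg: "0 \<le> cliff_dist ds a b U"
  by (simp add: cliff_dist_def)

lemma disp_idx_eq_list_all2:
  "disp_idx ds = {as. list_all2 (\<lambda>a dL. fst a < dL \<and> snd a < dL) as ds}"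
  by (auto simp: disp_idx_def list_all2_conv_all_nth)

lemma disp_idx_append:
  "disp_idx (ds1 @ ds2) = (\<lambda>(a1, a2). a1 @ a2) ` (disp_idx ds1 \<times> disp_idx ds2)"
  by (auto simp: disp_idx_eq_list_all2 list_all2_append2 image_iff dest: list_all2_lengthD)

lemma sum_disp_idx_append:
  "(\<Sum>a\<in>disp_idx (ds1 @ ds2). f a) = (\<Sum>a1\<in>disp_idx ds1. \<Sum>a2\<in>disp_idx ds2. f (a1 @ a2))"
proof -
  have "inj_on (\<lambda>(a1, a2). a1 @ a2) (disp_idx ds1 \<times> disp_idx ds2)"
    by (auto simp: inj_on_def disp_idx_def)
  then show ?thesis
    by (simp add: disp_idx_append sum.reindex sum.cartesian_product split_def)
qed

definition cliff_moment :: "real \<Rightarrow> nat list \<Rightarrow> cmat \<Rightarrow> real" where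
  "cliff_moment \<alpha> ds U =
     (\<Sum>a\<in>disp_idx ds. \<Sum>b\<in>disp_idx ds. cliff_dist ds a b U powr \<alpha>) / (real (prod_list ds))\<^sup>2"

lemma cliff_entropy_eq_moment:
  "cliff_entropy \<alpha> ds U = (1 - cliff_moment \<alpha> ds U) / (\<alpha> - 1)"
  by (simp add: cliff_entropy_def cliff_moment_def Let_def)

lemma cliff_moment_kron:
  "cliff_moment \<alpha> (ds1 @ ds2) (kron (prod_list ds2) U V)
     = cliff_moment \<alpha> ds1 U * cliff_moment \<alpha> ds2 V"
proof -
  let ?W = "kron (prod_list ds2) U V"
  have summand: "cliff_dist (ds1 @ ds2) (a1 @ a2) (b1 @ b2) ?W powr \<alpha>
      = cliff_dist ds1 a1 b1 U powr \<alpha> * cliff_dist ds2 a2 b2 V powr \<alpha>"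
    if "a1 \<in> disp_idx ds1" and "b1 \<in> disp_idx ds1" for a1 a2 b1 b2
  proof -
    have "length a1 = length ds1" and "length b1 = length ds1"
      using that by (simp_all add: disp_idx_def)
    then show ?thesis
      by (simp add: cliff_dist_kron powr_mult cliff_dist_nonneg)
  qed
  have "(\<Sum>a\<in>disp_idx (ds1 @ ds2). \<Sum>b\<in>disp_idx (ds1 @ ds2). cliff_dist (ds1 @ ds2) a b ?W powr \<alpha>)
      = (\<Sum>a1\<in>disp_idx ds1. \<Sum>a2\<in>disp_idx ds2. \<Sum>b1\<in>disp_idx ds1. \<Sum>b2\<in>disp_idx ds2.
           cliff_dist ds1 a1 b1 U powr \<alpha> * cliff_dist ds2 a2 b2 V powr \<alpha>)"
    unfolding sum_disp_idx_append by (intro sum.cong refl summand)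
  also have "\<dots> = (\<Sum>a\<in>disp_idx ds1. \<Sum>b\<in>disp_idx ds1. cliff_dist ds1 a b U powr \<alpha>)
                 * (\<Sum>a\<in>disp_idx ds2. \<Sum>b\<in>disp_idx ds2. cliff_dist ds2 a b V powr \<alpha>)"
    by (simp only: sum_product)
  finally show ?thesis
    by (simp add: cliff_moment_def power_mult_distrib)
qed

lemma tsallis_composition:
  fixes c x y :: "'a::field"
  assumes "c \<noteq> 0"
  shows "(1 - x * y) / c = (1 - x) / c + (1 - y) / c - c * ((1 - x) / c) * ((1 - y) / c)"
  using assms by (simp add: field_simps)

theorem theorem3:
  fixes \<alpha> :: real and ds1 ds2 :: "nat list" and U V :: cmat
  assumes "\<alpha> > 0" and "\<alpha> \<noteq> 1"
    and "\<forall>dL\<in>set ds1. dL > 0" and "\<forall>dL\<in>set ds2. dL > 0"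
    and "unitary_mat (prod_list ds1) U" and "unitary_mat (prod_list ds2) V"
  shows "cliff_entropy \<alpha> (ds1 @ ds2) (kron (prod_list ds2) U V)
         = cliff_entropy \<alpha> ds1 U + cliff_entropy \<alpha> ds2 V
           - (\<alpha> - 1) * cliff_entropy \<alpha> ds1 U * cliff_entropy \<alpha> ds2 V"
proof -
  have "\<alpha> - 1 \<noteq> 0"
    using \<open>\<alpha> \<noteq> 1\<close> by simp
  then show ?thesis
    unfolding cliff_entropy_eq_moment cliff_moment_kron by (rule tsallis_composition)
qed

end
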